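(* For all integers $k$ and $D$ with $D\ge k\ge 2$, there exists a $k$-degenerate graph $H_{D,k}$ with maximum degree $D$ such that $H_{D,k}^2$ is not $\big((2k-1)D-k^2-1\big)$-degenerate; in fact $H_{D,k}^2$ contains an induced subgraph of minimum degree $(2k-1)D-k^2$.
   Context: A graph is $k$-degenerate if every subgraph has a vertex of degree at most $k$. The square $H^2$ is obtained from $H$ by adding an edge between every pair of vertices at distance 2 in $H$. *)

theory Defs
  imports Main
begin

definition simple_graph :: "'a set \<Rightarrow> ('a \<Rightarrow> 'a \<Rightarrow> bool) \<Rightarrow> bool" where
  "simple_graph V E \<longleftrightarrow> finite V \<and> (\<forall>x y. E x y \<longrightarrow> E y x) \<and> (\<forall>x. \<not> E x x)
     \<and> (\<forall>x y. E x y \<longrightarrow> x \<in> V \<and> y \<in> V)"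

definition deg :: "'a set \<Rightarrow> ('a \<Rightarrow> 'a \<Rightarrow> bool) \<Rightarrow> 'a \<Rightarrow> nat" where
  "deg W E v = card {u \<in> W. E v u}"

definition subgraph :: "'a set \<Rightarrow> ('a \<Rightarrow> 'a \<Rightarrow> bool) \<Rightarrow> 'a set \<Rightarrow> ('a \<Rightarrow> 'a \<Rightarrow> bool) \<Rightarrow> bool" where
  "subgraph W F V E \<longleftrightarrow> W \<subseteq> V \<and> (\<forall>x y. F x y \<longrightarrow> E x y \<and> x \<in> W \<and> y \<in> W)
     \<and> (\<forall>x y. F x y \<longrightarrow> F y x)"

definition degenerate :: "nat \<Rightarrow> 'a set \<Rightarrow> ('a \<Rightarrow> 'a \<Rightarrow> bool) \<Rightarrow> bool" where
  "degenerate k V E \<longleftrightarrow>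
     (\<forall>W F. subgraph W F V E \<and> W \<noteq> {} \<longrightarrow> (\<exists>v\<in>W. deg W F v \<le> k))"

definition max_degree_eq :: "'a set \<Rightarrow> ('a \<Rightarrow> 'a \<Rightarrow> bool) \<Rightarrow> nat \<Rightarrow> bool" where
  "max_degree_eq V E D \<longleftrightarrow> (\<forall>v\<in>V. deg V E v \<le> D) \<and> (\<exists>v\<in>V. deg V E v = D)"

definition min_degree_eq :: "'a set \<Rightarrow> ('a \<Rightarrow> 'a \<Rightarrow> bool) \<Rightarrow> nat \<Rightarrow> bool" where
  "min_degree_eq V E d \<longleftrightarrow> (\<forall>v\<in>V. d \<le> deg V E v) \<and> (\<exists>v\<in>V. deg V E v = d)"

definition graph_square :: "('a \<Rightarrow> 'a \<Rightarrow> bool) \<Rightarrow> 'a \<Rightarrow> 'a \<Rightarrow> bool" where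
  "graph_square E x y \<longleftrightarrow> x \<noteq> y \<and> (E x y \<or> (\<exists>z. E x z \<and> E z y))"

end

theory Submission
  imports Defs "HOL-Library.Countable"
begin

text \<open>Take the incidence graph of the points of the box
  \<open>[D]\<^sup>k \<times> [k]\<^sup>D\<^sup>-\<^sup>k\<close> and its axis-parallel lines. Every point lies on \<open>D\<close> lines and every
  line has at most \<open>D\<close> points, so the maximum degree is \<open>D\<close>. The graph is \<open>k\<close>-degenerate:
  a subgraph containing a short line (one of the last \<open>D - k\<close> directions) has a vertex
  of degree at most \<open>k\<close> there; otherwise each of its points meets only lines of the
  first \<open>k\<close> directions. In the square, two points are adjacent iff they differ in exactly
  one coordinate, so the points induce a Hamming graph of degree
  \<open>k(D - 1) + (D - k)(k - 1) = (2k - 1)D - k\<^sup>2\<close>.\<close>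

lemma deg_mono:
  assumes "finite W" "\<And>u. F v u \<Longrightarrow> G v u"
  shows "deg W F v \<le> deg W G v"
  unfolding deg_def using assms by (intro card_mono) auto

lemma deg_image:
  assumes "inj f" "\<And>a b. G' (f a) (f b) = G a b"
  shows "deg (f ` W) G' (f v) = deg W G v"
proof -
  have "{u \<in> f ` W. G' (f v) u} = f ` {u \<in> W. G v u}" using assms(2) by auto
  then show ?thesis unfolding deg_def
    by (simp add: card_image inj_on_subset[OF assms(1)])
qed

lemma graph_square_sym:
  assumes "\<And>x y. E x y \<Longrightarrow> E y x" "graph_square E x y"
  shows "graph_square E y x"
  using assms unfolding graph_square_def by blast

lemma not_degenerate_if_min_degree:
  assumes "W \<subseteq> V" "W \<noteq> {}" "min_degree_eq W G d" "0 < d"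
    and "\<And>x y. G x y \<Longrightarrow> G y x"
  shows "\<not> degenerate (d - 1) V G"
proof
  assume "degenerate (d - 1) V G"
  moreover define F where "F x y \<longleftrightarrow> G x y \<and> x \<in> W \<and> y \<in> W" for x y
  moreover have "subgraph W F V G" using assms by (auto simp: subgraph_def F_def)
  ultimately obtain v where v: "v \<in> W" "deg W F v \<le> d - 1"
    using assms(2) unfolding degenerate_def by blast
  have "deg W F v = deg W G v" unfolding deg_def F_def using v(1) by (metis (lifting))
  then show False using v assms(3,4) unfolding min_degree_eq_def by fastforce
qed

lemma square_not_degenerate_if_min_degree:
  assumes "simple_graph V E" "W \<subseteq> V" "W \<noteq> {}" "min_degree_eq W (graph_square E) d" "0 < d"
  shows "\<not> degenerate (d - 1) V (graph_square E)"
proof (rule not_degenerate_if_min_degree[OF assms(2-5)])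
  have "\<And>x y. E x y \<Longrightarrow> E y x" using assms(1) by (simp add: simple_graph_def)
  then show "\<And>x y. graph_square E x y \<Longrightarrow> graph_square E y x"
    by (rule graph_square_sym)
qed

definition map_graph :: "('a \<Rightarrow> 'b) \<Rightarrow> ('a \<Rightarrow> 'a \<Rightarrow> bool) \<Rightarrow> 'b \<Rightarrow> 'b \<Rightarrow> bool" where
  "map_graph f E x y \<longleftrightarrow> (\<exists>a b. x = f a \<and> y = f b \<and> E a b)"

lemma map_graph_apply: "inj f \<Longrightarrow> map_graph f E (f a) (f b) = E a b"
  by (auto simp: map_graph_def dest: injD)

lemma deg_map_graph: "inj f \<Longrightarrow> deg (f ` W) (map_graph f E) (f v) = deg W E v"
  by (rule deg_image) (simp_all add: map_graph_apply)

lemma simple_graph_map_graph: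
  "inj f \<Longrightarrow> simple_graph V E \<Longrightarrow> simple_graph (f ` V) (map_graph f E)"
  unfolding simple_graph_def map_graph_def by (blast dest: injD)

lemma graph_square_map_graph:
  "inj f \<Longrightarrow> graph_square (map_graph f E) = map_graph f (graph_square E)"
  unfolding graph_square_def map_graph_def by (intro ext) (blast dest: injD)

lemma max_degree_eq_map_graph:
  "inj f \<Longrightarrow> max_degree_eq (f ` V) (map_graph f E) D = max_degree_eq V E D"
  by (simp add: max_degree_eq_def deg_map_graph)

lemma min_degree_eq_map_graph:
  "inj f \<Longrightarrow> min_degree_eq (f ` V) (map_graph f E) d = min_degree_eq V E d"
  by (simp add: min_degree_eq_def deg_map_graph)

lemma degenerate_map_graph:
  assumes f: "inj f" and E: "degenerate k V E"
  shows "degenerate k (f ` V) (map_graph f E)"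
  unfolding degenerate_def
proof (intro allI impI)
  fix W' F' assume "subgraph W' F' (f ` V) (map_graph f E) \<and> W' \<noteq> {}"
  then have sub: "subgraph W' F' (f ` V) (map_graph f E)" and "W' \<noteq> {}" by blast+
  define W where "W = f -` W'"
  define F where "F a b \<longleftrightarrow> F' (f a) (f b)" for a b
  have W': "W' = f ` W" using sub unfolding W_def subgraph_def by auto
  have "W \<subseteq> V" using sub f unfolding subgraph_def W_def by (auto dest: injD)
  moreover have "E a b \<and> a \<in> W \<and> b \<in> W" if "F a b" for a b
  proof -
    have "map_graph f E (f a) (f b) \<and> f a \<in> W' \<and> f b \<in> W'"
      using sub that unfolding subgraph_def F_def by blast
    then show ?thesis by (simp add: map_graph_apply[OF f] W_def)
  qed
  ultimately have "subgraph W F V E" using sub unfolding subgraph_def F_def by auto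
  moreover have "W \<noteq> {}" using \<open>W' \<noteq> {}\<close> W' by auto
  ultimately obtain v where "v \<in> W" "deg W F v \<le> k"
    using E unfolding degenerate_def by blast
  moreover have "deg W' F' (f v) = deg W F v"
    unfolding W' F_def by (rule deg_image[OF f]) simp
  ultimately show "\<exists>v\<in>W'. deg W' F' v \<le> k" using W' by (metis imageI)
qed

subsection \<open>The incidence graph of a box and its lines\<close>

text \<open>Points of the box \<open>\<Prod>\<^sub>i\<^sub><\<^sub>D [n i]\<close> are \<open>Inl x\<close>; the line through \<open>x\<close> in direction \<open>i\<close>
  is \<open>Inr (i, x[i := 0])\<close>, i.e. it is represented by its point with \<open>i\<close>-th coordinate 0.\<close>

type_synonym box_vertex = "nat list + nat \<times> nat list"

definition box_points :: "(nat \<Rightarrow> nat) \<Rightarrow> nat \<Rightarrow> nat list set" where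
  "box_points n D = {xs. length xs = D \<and> (\<forall>i<D. xs ! i < n i)}"

definition box_vertices :: "(nat \<Rightarrow> nat) \<Rightarrow> nat \<Rightarrow> box_vertex set" where
  "box_vertices n D =
     Inl ` box_points n D \<union> Inr ` {(i, x[i := 0]) | i x. i < D \<and> x \<in> box_points n D}"

fun box_incidence :: "(nat \<Rightarrow> nat) \<Rightarrow> nat \<Rightarrow> box_vertex \<Rightarrow> box_vertex \<Rightarrow> bool" where
  "box_incidence n D (Inl x) (Inr (i, y)) \<longleftrightarrow> x \<in> box_points n D \<and> i < D \<and> y = x[i := 0]"
| "box_incidence n D (Inr (i, y)) (Inl x) \<longleftrightarrow> x \<in> box_points n D \<and> i < D \<and> y = x[i := 0]"
| "box_incidence n D _ _ \<longleftrightarrow> False"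

lemma length_box_point: "x \<in> box_points n D \<Longrightarrow> length x = D"
  by (simp add: box_points_def)

lemma list_update_nth_if_update_eq:
  assumes "length u = length w" "u[i := c] = w[i := c]"
  shows "u = w[i := u ! i]"
proof (rule nth_equalityI)
  fix j assume "j < length u"
  then show "u ! j = w[i := u ! i] ! j"
    using arg_cong[OF assms(2), of "\<lambda>xs. xs ! j"] assms(1) by (cases "j = i") auto
qed (use assms in simp)

lemma finite_box_points: "finite (box_points n D)"
proof (rule finite_subset)
  show "box_points n D \<subseteq> {xs. set xs \<subseteq> {..<\<Sum>i<D. n i} \<and> length xs = D}"
    by (auto simp: box_points_def in_set_conv_nth)
      (meson finite_lessThan lessThan_iff less_le_trans member_le_sum zero_le)
qed (rule finite_lists_length_eq, simp)

lemma finite_box_vertices: "finite (box_vertices n D)"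
proof -
  have "{(i, x[i := 0]) | i x. i < D \<and> x \<in> box_points n D}
      = (\<lambda>(i, x). (i, x[i := 0])) ` ({..<D} \<times> box_points n D)"
    by auto
  then show ?thesis by (simp add: box_vertices_def finite_box_points)
qed

lemma simple_graph_box: "simple_graph (box_vertices n D) (box_incidence n D)"
proof -
  have "box_incidence n D y x" "x \<in> box_vertices n D" "y \<in> box_vertices n D"
    if "box_incidence n D x y" for x y
    using that by (induction n D x y rule: box_incidence.induct) (auto simp: box_vertices_def)
  then show ?thesis
    unfolding simple_graph_def using finite_box_vertices by (auto elim: box_incidence.elims)
qed

lemma deg_box_point:
  assumes x: "x \<in> box_points n D"
  shows "deg (box_vertices n D) (box_incidence n D) (Inl x) = D"
proof -
  have "{u \<in> box_vertices n D. box_incidence n D (Inl x) u} = (\<lambda>i. Inr (i, x[i := 0])) ` {..<D}"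
    using x by (auto simp: box_vertices_def)
  moreover have "inj_on (\<lambda>i. Inr (i, x[i := 0]) :: box_vertex) {..<D}"
    by (auto simp: inj_on_def)
  ultimately show ?thesis by (simp add: deg_def card_image)
qed

lemma deg_box_line_le:
  assumes "finite A"
  shows "deg A (box_incidence n D) (Inr (i, y)) \<le> n i"
proof -
  have "{u \<in> A. box_incidence n D (Inr (i, y)) u} \<subseteq> (\<lambda>a. Inl (y[i := a])) ` {..<n i}"
  proof
    fix u assume "u \<in> {u \<in> A. box_incidence n D (Inr (i, y)) u}"
    then obtain x where u: "u = Inl x" "x \<in> box_points n D" "i < D" "y = x[i := 0]"
      by (cases u) auto
    then have "x = y[i := x ! i]" "x ! i < n i"
      using list_update_nth_if_update_eq[of x x] by (auto simp: box_points_def)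
    then show "u \<in> (\<lambda>a. Inl (y[i := a])) ` {..<n i}" using u(1) by (metis image_eqI lessThan_iff)
  qed
  then have "deg A (box_incidence n D) (Inr (i, y)) \<le> card ((\<lambda>a. Inl (y[i := a]) :: box_vertex) ` {..<n i})"
    unfolding deg_def by (intro card_mono) auto
  also have "\<dots> \<le> n i" using card_image_le[of "{..<n i}"] by simp
  finally show ?thesis .
qed

lemma max_degree_box:
  assumes "\<forall>i<D. 0 < n i \<and> n i \<le> D"
  shows "max_degree_eq (box_vertices n D) (box_incidence n D) D"
  unfolding max_degree_eq_def
proof (intro conjI ballI bexI)
  fix v assume v: "v \<in> box_vertices n D"
  show "deg (box_vertices n D) (box_incidence n D) v \<le> D"
  proof (cases v)
    case (Inl x)
    then show ?thesis using v deg_box_point by (auto simp: box_vertices_def)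
  next
    case (Inr l)
    then obtain i y where "v = Inr (i, y)" "i < D" using v by (auto simp: box_vertices_def)
    moreover have "deg (box_vertices n D) (box_incidence n D) (Inr (i, y)) \<le> n i"
      by (rule deg_box_line_le[OF finite_box_vertices])
    ultimately show ?thesis using assms by fastforce
  qed
next
  have "replicate D 0 \<in> box_points n D" using assms by (simp add: box_points_def)
  then show "Inl (replicate D 0) \<in> box_vertices n D"
    and "deg (box_vertices n D) (box_incidence n D) (Inl (replicate D 0)) = D"
    by (simp_all add: deg_box_point) (simp add: box_vertices_def)
qed

lemma deg_box_point_le:
  assumes "finite W"
  shows "deg W (box_incidence n D) (Inl x) \<le> card {i. i < D \<and> Inr (i, x[i := 0]) \<in> W}"
proof -
  have "{u \<in> W. box_incidence n D (Inl x) u}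
      \<subseteq> (\<lambda>i. Inr (i, x[i := 0])) ` {i. i < D \<and> Inr (i, x[i := 0]) \<in> W}"
    by (auto elim: box_incidence.elims)
  then have "deg W (box_incidence n D) (Inl x)
      \<le> card ((\<lambda>i. Inr (i, x[i := 0]) :: box_vertex) ` {i. i < D \<and> Inr (i, x[i := 0]) \<in> W})"
    unfolding deg_def by (intro card_mono) auto
  also have "\<dots> \<le> card {i. i < D \<and> Inr (i, x[i := 0]) \<in> W}" by (rule card_image_le) simp
  finally show ?thesis .
qed

lemma degenerate_box:
  assumes long: "card {i. i < D \<and> k < n i} \<le> k"
  shows "degenerate k (box_vertices n D) (box_incidence n D)"
  unfolding degenerate_def
proof (intro allI impI)
  fix W F assume "subgraph W F (box_vertices n D) (box_incidence n D) \<and> W \<noteq> {}"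
  then have W: "W \<subseteq> box_vertices n D" "W \<noteq> {}"
    and F: "\<And>x y. F x y \<Longrightarrow> box_incidence n D x y \<and> x \<in> W \<and> y \<in> W"
    by (auto simp: subgraph_def)
  have fin: "finite W" using finite_subset[OF W(1) finite_box_vertices] .
  have deg_F: "deg W F v \<le> deg W (box_incidence n D) v" for v
    using F by (intro deg_mono[OF fin]) auto
  consider (short_line) i y where "Inr (i, y) \<in> W" "n i \<le> k"
    | (point) x where "Inl x \<in> W" "\<forall>i y. Inr (i, y) \<in> W \<longrightarrow> k < n i"
    | (lines_only) "\<forall>v\<in>W. \<exists>l. v = Inr l"
    by (metis not_le sumE surj_pair)
  then show "\<exists>v\<in>W. deg W F v \<le> k"
  proof cases
    case short_line
    then show ?thesis using deg_F deg_box_line_le[OF fin] by (meson le_trans)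
  next
    case point
    have "card {i. i < D \<and> Inr (i, x[i := 0]) \<in> W} \<le> card {i. i < D \<and> k < n i}"
      using point(2) by (intro card_mono) auto
    then show ?thesis using point(1) deg_F deg_box_point_le[OF fin, of n D x] long
      by (meson le_trans)
  next
    case lines_only
    obtain v where v: "v \<in> W" using W(2) by auto
    have "{u \<in> W. F v u} = {}"
      using lines_only v F by (fastforce elim: box_incidence.elims)
    then have "deg W F v = 0" unfolding deg_def by (metis card.empty)
    then show ?thesis using v by (metis le0)
  qed
qed

lemma box_square_neighbours:
  assumes w: "w \<in> box_points n D"
  shows "{u \<in> Inl ` box_points n D. graph_square (box_incidence n D) (Inl w) u}
       = Inl ` (\<Union>i<D. (\<lambda>a. w[i := a]) ` ({..<n i} - {w ! i}))"
proof (intro equalityI subsetI)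
  fix u :: box_vertex assume "u \<in> {u \<in> Inl ` box_points n D. graph_square (box_incidence n D) (Inl w) u}"
  then obtain v z where u: "u = Inl v" "v \<in> box_points n D" "v \<noteq> w"
    and z: "box_incidence n D (Inl w) z" "box_incidence n D z (Inl v)"
    by (auto simp: graph_square_def)
  then obtain i where i: "z = Inr (i, w[i := 0])" "i < D" by (cases z) auto
  with z have "v[i := 0] = w[i := 0]" by simp
  then have "v = w[i := v ! i]"
    using list_update_nth_if_update_eq length_box_point u(2) w by metis
  moreover have "v ! i < n i" using u i by (simp add: box_points_def)
  ultimately have "v \<in> (\<lambda>a. w[i := a]) ` ({..<n i} - {w ! i})"
    using u(3) by (metis (no_types) image_eqI lessThan_iff Diff_iff singletonD list_update_id)
  then show "u \<in> Inl ` (\<Union>i<D. (\<lambda>a. w[i := a]) ` ({..<n i} - {w ! i}))"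
    using u(1) i(2) by blast
next
  fix u :: box_vertex assume "u \<in> Inl ` (\<Union>i<D. (\<lambda>a. w[i := a]) ` ({..<n i} - {w ! i}))"
  then obtain i a where ia: "u = Inl (w[i := a])" "i < D" "a < n i" "a \<noteq> w ! i" by auto
  then have "w[i := a] \<in> box_points n D" "w[i := a] \<noteq> w"
    using w by (auto simp: box_points_def nth_list_update) (metis length_box_point nth_list_update_eq w)
  moreover have "box_incidence n D (Inl w) (Inr (i, w[i := 0]))"
    and "box_incidence n D (Inr (i, w[i := 0])) (Inl (w[i := a]))"
    using w ia \<open>w[i := a] \<in> box_points n D\<close> by simp_all
  ultimately have "graph_square (box_incidence n D) (Inl w) u"
    unfolding graph_square_def ia(1) by (metis sum.inject(1))
  then show "u \<in> {u \<in> Inl ` box_points n D. graph_square (box_incidence n D) (Inl w) u}"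
    using ia(1) \<open>w[i := a] \<in> box_points n D\<close> by blast
qed

lemma deg_square_box_point:
  assumes w: "w \<in> box_points n D"
  shows "deg (Inl ` box_points n D) (graph_square (box_incidence n D)) (Inl w) = (\<Sum>i<D. n i - 1)"
proof -
  have "deg (Inl ` box_points n D) (graph_square (box_incidence n D)) (Inl w)
      = card (\<Union>i<D. (\<lambda>a. w[i := a]) ` ({..<n i} - {w ! i}))"
    unfolding deg_def box_square_neighbours[OF w] by (simp add: card_image)
  also have "\<dots> = (\<Sum>i<D. card ((\<lambda>a. w[i := a]) ` ({..<n i} - {w ! i})))"
    using length_box_point[OF w]
    by (intro card_UN_disjoint) (auto, metis nth_list_update_eq nth_list_update_neq)
  also have "\<dots> = (\<Sum>i<D. n i - 1)"
  proof (rule sum.cong)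
    fix i assume i: "i \<in> {..<D}"
    then have "inj_on (\<lambda>a. w[i := a]) ({..<n i} - {w ! i})"
      using length_box_point[OF w] by (auto simp: inj_on_def) (metis nth_list_update_eq)
    moreover have "w ! i < n i" using w i by (simp add: box_points_def)
    ultimately show "card ((\<lambda>a. w[i := a]) ` ({..<n i} - {w ! i})) = n i - 1"
      by (simp add: card_image)
  qed simp
  finally show ?thesis .
qed

lemma min_degree_square_box:
  assumes "\<forall>i<D. 0 < n i"
  shows "min_degree_eq (Inl ` box_points n D) (graph_square (box_incidence n D)) (\<Sum>i<D. n i - 1)"
proof -
  have "replicate D 0 \<in> box_points n D" using assms by (simp add: box_points_def)
  then show ?thesis by (auto simp: min_degree_eq_def deg_square_box_point)
qed

definition box_sides :: "nat \<Rightarrow> nat \<Rightarrow> nat \<Rightarrow> nat" where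
  "box_sides k D i = (if i < k then D else k)"

lemma card_long_box_sides: "card {i. i < D \<and> k < box_sides k D i} \<le> k"
proof -
  have "{i. i < D \<and> k < box_sides k D i} \<subseteq> {..<k}" by (auto simp: box_sides_def)
  then show ?thesis by (metis card_lessThan card_mono finite_lessThan)
qed

lemma sum_box_sides:
  assumes "k \<le> D"
  shows "(\<Sum>i<D. box_sides k D i - 1) = (2*k - 1) * D - k^2"
proof -
  have "(\<Sum>i<D. box_sides k D i - 1)
      = (\<Sum>i\<in>{0..<k}. box_sides k D i - 1) + (\<Sum>i\<in>{k..<D}. box_sides k D i - 1)"
    using assms by (simp add: sum.atLeastLessThan_concat lessThan_atLeast0)
  also have "\<dots> = k * (D - 1) + (D - k) * (k - 1)"
    by (simp add: box_sides_def)
  also have "\<dots> = (2*k - 1) * D - k^2"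
  proof -
    obtain t where "D = k + t" using assms le_Suc_ex by blast
    then show ?thesis by (cases k) (simp_all add: algebra_simps power2_eq_square)
  qed
  finally show ?thesis .
qed

lemma max_degree_box_sides:
  assumes "1 \<le> k" "k \<le> D"
  shows "max_degree_eq (box_vertices (box_sides k D) D) (box_incidence (box_sides k D) D) D"
  using assms by (intro max_degree_box) (simp add: box_sides_def)

lemma min_degree_square_box_sides:
  assumes "1 \<le> k" "k \<le> D"
  shows "min_degree_eq (Inl ` box_points (box_sides k D) D)
           (graph_square (box_incidence (box_sides k D) D)) ((2*k - 1) * D - k^2)"
  using min_degree_square_box[of D "box_sides k D"] assms
  unfolding sum_box_sides[OF assms(2)] by (simp add: box_sides_def)

lemma square_degree_box_sides_pos:
  fixes k D :: nat
  assumes "2 \<le> k" "k \<le> D"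
  shows "0 < (2*k - 1) * D - k^2"
proof -
  obtain j where j: "k = Suc (Suc j)" using assms(1) by (metis add_2_eq_Suc le_Suc_ex)
  have "k * k < (2*k - 1) * k" unfolding j by simp
  also have "\<dots> \<le> (2*k - 1) * D" using assms(2) by simp
  finally show ?thesis by (simp add: power2_eq_square)
qed

theorem mainTheorem12:
  fixes k D :: nat
  assumes "2 \<le> k" and "k \<le> D"
  shows "\<exists>(V :: nat set) E.
           simple_graph V E \<and> degenerate k V E \<and> max_degree_eq V E D
         \<and> \<not> degenerate ((2*k - 1) * D - k^2 - 1) V (graph_square E)
         \<and> (\<exists>W. W \<subseteq> V \<and> W \<noteq> {} \<and>
               min_degree_eq W (graph_square E) ((2*k - 1) * D - k^2))"
proof -
  let ?V = "box_vertices (box_sides k D) D" and ?E = "box_incidence (box_sides k D) D"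
  let ?W = "Inl ` box_points (box_sides k D) D" and ?d = "(2*k - 1) * D - k^2"
  define f where "f = (to_nat :: box_vertex \<Rightarrow> nat)"
  have f: "inj f" by (simp add: f_def)
  have k: "1 \<le> k" using assms(1) by simp
  have W: "min_degree_eq ?W (graph_square ?E) ?d" by (rule min_degree_square_box_sides[OF k assms(2)])
  moreover from W have "?W \<noteq> {}" by (auto simp: min_degree_eq_def)
  ultimately have "f ` ?W \<subseteq> f ` ?V" "f ` ?W \<noteq> {}"
    "min_degree_eq (f ` ?W) (graph_square (map_graph f ?E)) ?d"
    by (auto simp: box_vertices_def graph_square_map_graph[OF f] min_degree_eq_map_graph[OF f])
  moreover have "simple_graph (f ` ?V) (map_graph f ?E)"
    by (rule simple_graph_map_graph[OF f simple_graph_box])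
  moreover have "degenerate k (f ` ?V) (map_graph f ?E)"
    by (rule degenerate_map_graph[OF f degenerate_box[OF card_long_box_sides]])
  moreover have "max_degree_eq (f ` ?V) (map_graph f ?E) D"
    using max_degree_box_sides[OF k assms(2)] by (simp add: max_degree_eq_map_graph[OF f])
  ultimately show ?thesis
    using square_not_degenerate_if_min_degree square_degree_box_sides_pos[OF assms] by blast
qed

end
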